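(* Under the standing setup below, the Lie brackets $[e_1,e_2]$, $[e_1,e_3]$ and $[e_2,e_3]$ are (pointwise) linear combinations of $e_2$ and $e_3$.
   Context: Standing setup: $\mathbb{C}P^3(4)$ carries the Fubini–Study metric of constant holomorphic sectional curvature $4$, complex structure $J$, and $\pi:S^7(1)\subset\mathbb{C}^4\to\mathbb{C}P^3(4)$ is the Hopf projection. $M$ is a connected $3$-dimensional non-minimal Lagrangian submanifold of $\mathbb{C}P^3(4)$ attaining equality at every point in $\delta_M\le 2+\tfrac32\|H\|^2$ (here $\delta_M=\tau-\inf K$, $\tau$ the scalar curvature $\sum_{i<j}K(e_i\wedge e_j)$, $H=\frac13\operatorname{trace}h$). Let $h$ be the second fundamental form and $C(X,Y,Z)=\langle h(X,Y),JZ\rangle$. Locally there is an orthonormal frame $e_1,e_2,e_3$ with $C(e_2,e_2,e_2)=-C(e_3,e_3,e_2)=:a$, $C(e_1,e_1,e_1)=4\lambda_2$, $C(e_2,e_2,e_1)=C(e_3,e_3,e_1)=\lambda_2$ with $\lambda_2\neq0$, and all other components zero up to symmetry. $E_0:M\to S^7(1)\subset\mathbb{C}^4$ is a horizontal lift of $M$ (i.e. $\pi\circ E_0$ is the inclusion and $dE_0(X)$ is orthogonal to $E_0$ and $iE_0$ for all $X$), $E_j=dE_0(e_j)$, and $D$ is the flat connection of $\mathbb{C}^4=\mathbb{R}^8$. There is a smooth function $b_1$ such that $D_{E_1}E_1=4\lambda_2 iE_1-E_0$ and $D_{E_j}E_1=(b_1+i\lambda_2)E_j$ for $j=2,3$;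 moreover $e_2(\lambda_2)=e_3(\lambda_2)=e_2(b_1)=e_3(b_1)=0$, $e_1(\lambda_2)=2\lambda_2b_1$ and $e_1(b_1)=-(1+b_1^2+3\lambda_2^2)$. *)

theory Defs
  imports "HOL-Analysis.Analysis"
begin

text \<open>A coordinate chart of M is an open set U of real^3; vector fields on M
  are maps U \<Rightarrow> real^3.  C^4 = R^8 is modelled as complex^4 with the real inner product
  (inner x y = Re (sum_k x_k * conj y_k)), and D (flat connection) is the ordinary
  directional derivative.\<close>

definition dirD :: "('a::real_normed_vector \<Rightarrow> 'b::real_normed_vector) \<Rightarrow> 'a \<Rightarrow> 'a \<Rightarrow> 'b" where
  "dirD f x v = frechet_derivative f (at x) v"

fun iter_dirD :: "('a::real_normed_vector \<Rightarrow> 'b::real_normed_vector) \<Rightarrow> 'a list \<Rightarrow> 'a \<Rightarrow> 'b" where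
  "iter_dirD f [] = f"
| "iter_dirD f (v # vs) = (\<lambda>x. dirD (iter_dirD f vs) x v)"

definition smooth_on :: "'a::real_normed_vector set \<Rightarrow> ('a \<Rightarrow> 'b::real_normed_vector) \<Rightarrow> bool" where
  "smooth_on U f = (\<forall>vs. \<forall>x\<in>U. iter_dirD f vs differentiable (at x))"

definition imul :: "complex^4 \<Rightarrow> complex^4" where
  "imul v = (\<chi> k. \<i> * v $ k)"

definition lie :: "(real^3 \<Rightarrow> real^3) \<Rightarrow> (real^3 \<Rightarrow> real^3) \<Rightarrow> real^3 \<Rightarrow> real^3" where
  "lie X Y x = dirD Y x (X x) - dirD X x (Y x)"

definition liftE :: "(real^3 \<Rightarrow> complex^4) \<Rightarrow> (real^3 \<Rightarrow> real^3) \<Rightarrow> real^3 \<Rightarrow> complex^4" where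
  "liftE E0 X = (\<lambda>x. dirD E0 x (X x))"

text \<open>The prescribed components C(e_j,e_k,e_l) (fully symmetric, j,k,l in {1,2,3}):
  C111 = 4 l2, C222 = a, C332 = -a, C221 = C331 = l2, all others (up to symmetry) zero.\<close>
definition Cval :: "real \<Rightarrow> real \<Rightarrow> nat \<Rightarrow> nat \<Rightarrow> nat \<Rightarrow> real" where
  "Cval a l2 j k l =
     (let cnt = (\<lambda>m. length (filter (\<lambda>t. t = m) [j, k, l])) in
      if (cnt 1, cnt 2, cnt 3) = (3, 0, 0) then 4 * l2
      else if (cnt 1, cnt 2, cnt 3) = (0, 3, 0) then a
      else if (cnt 1, cnt 2, cnt 3) = (0, 1, 2) then - a
      else if (cnt 1, cnt 2, cnt 3) = (1, 2, 0) then l2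
      else if (cnt 1, cnt 2, cnt 3) = (1, 0, 2) then l2
      else 0)"

end

theory Submission
  imports Defs
begin

text \<open>Since \<open>e\<^sub>2(b\<^sub>1) = e\<^sub>3(b\<^sub>1) = 0\<close> while \<open>e\<^sub>1(b\<^sub>1) = -(1 + b\<^sub>1\<^sup>2 + 3\<lambda>\<^sub>2\<^sup>2)\<close> never
  vanishes, and \<open>e\<^sub>1, e\<^sub>2, e\<^sub>3\<close> is a frame (their images under \<open>dE\<^sub>0\<close> are orthonormal), every
  tangent vector annihilating \<open>b\<^sub>1\<close> is a combination of \<open>e\<^sub>2\<close> and \<open>e\<^sub>3\<close>. Each bracket annihilates
  \<open>b\<^sub>1\<close>: in \<open>[e\<^sub>j, e\<^sub>k] b\<^sub>1 = e\<^sub>j(e\<^sub>k b\<^sub>1) - e\<^sub>k(e\<^sub>j b\<^sub>1)\<close> the functions \<open>e\<^sub>2 b\<^sub>1\<close>, \<open>e\<^sub>3 b\<^sub>1\<close> vanish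
  identically, and \<open>e\<^sub>1 b\<^sub>1\<close> is a function of \<open>b\<^sub>1\<close> and \<open>\<lambda>\<^sub>2\<close>, both constant along \<open>e\<^sub>2, e\<^sub>3\<close>.
  The formula for \<open>[X, Y] f\<close> rests on the symmetry of second derivatives of smooth functions,
  proved from the mean value theorem.\<close>

lemma has_derivative_dirD:
  "f differentiable (at x) \<Longrightarrow> (f has_derivative dirD f x) (at x)"
  unfolding dirD_def[abs_def] using frechet_derivative_works by blast

lemma linear_dirD:
  "f differentiable (at x) \<Longrightarrow> linear (dirD f x)"
  using has_derivative_dirD has_derivative_linear by blast

lemma dirD_transform_within_open:
  assumes "open U" "x \<in> U" "\<And>y. y \<in> U \<Longrightarrow> F y = G y" "(G has_derivative G') (at x)"
  shows "dirD F x w = G' w"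
proof -
  have "(F has_derivative G') (at x)"
    by (rule has_derivative_transform_within_open[OF assms(4,1,2)]) (simp add: assms(3))
  then show ?thesis
    by (simp add: dirD_def frechet_derivative_at[symmetric])
qed

lemma has_real_derivative_along_line:
  fixes g :: "'a::real_normed_vector \<Rightarrow> real"
  assumes "g differentiable (at (a + t *\<^sub>R v))"
  shows "((\<lambda>s. g (a + s *\<^sub>R v)) has_real_derivative dirD g (a + t *\<^sub>R v) v) (at t)"
proof -
  have g: "(g has_derivative dirD g (a + t *\<^sub>R v)) (at (a + t *\<^sub>R v))"
    using assms by (rule has_derivative_dirD)
  have "((\<lambda>s. a + s *\<^sub>R v) has_derivative (\<lambda>s. s *\<^sub>R v)) (at t)"
    by (auto intro!: derivative_eq_intros)
  from has_derivative_compose[OF this g]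
  have "((\<lambda>s. g (a + s *\<^sub>R v)) has_derivative (\<lambda>s. dirD g (a + t *\<^sub>R v) v * s)) (at t)"
    using linear_cmul[OF has_derivative_linear[OF g]] by (simp add: mult.commute)
  then show ?thesis
    by (simp add: has_field_derivative_def)
qed

lemma mvt_along_line:
  fixes g :: "'a::real_normed_vector \<Rightarrow> real"
  assumes "h > 0" "\<And>t. 0 \<le> t \<Longrightarrow> t \<le> h \<Longrightarrow> g differentiable (at (a + t *\<^sub>R v))"
  shows "\<exists>t. 0 < t \<and> t < h \<and> g (a + h *\<^sub>R v) - g a = h * dirD g (a + t *\<^sub>R v) v"
  using MVT2[OF assms(1), of "\<lambda>s. g (a + s *\<^sub>R v)"] assms(2) has_real_derivative_along_line
  by fastforce

lemma smooth_on_iter_dirD_differentiable: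
  "smooth_on U f \<Longrightarrow> x \<in> U \<Longrightarrow> iter_dirD f vs differentiable (at x)"
  by (simp add: smooth_on_def)

lemma smooth_on_imp_differentiable:
  "smooth_on U f \<Longrightarrow> x \<in> U \<Longrightarrow> f differentiable (at x)"
  using smooth_on_iter_dirD_differentiable[of U f x "[]"] by simp

lemma second_difference_mvt:
  fixes f :: "'a::real_normed_vector \<Rightarrow> real"
  assumes f: "smooth_on U f" and h: "h > 0"
    and square: "\<And>s t. 0 \<le> s \<Longrightarrow> s \<le> h \<Longrightarrow> 0 \<le> t \<Longrightarrow> t \<le> h \<Longrightarrow> x + s *\<^sub>R u + t *\<^sub>R v \<in> U"
  shows "\<exists>s t. 0 < s \<and> s < h \<and> 0 < t \<and> t < h \<and>
           f (x + h *\<^sub>R u + h *\<^sub>R v) - f (x + h *\<^sub>R u) - f (x + h *\<^sub>R v) + f x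
             = h * h * iter_dirD f [v, u] (x + s *\<^sub>R u + t *\<^sub>R v)"
proof -
  have dif: "f differentiable (at (x + s *\<^sub>R u + t *\<^sub>R v))"
    "iter_dirD f [u] differentiable (at (x + s *\<^sub>R u + t *\<^sub>R v))"
    if "0 \<le> s" "s \<le> h" "0 \<le> t" "t \<le> h" for s t
    using smooth_on_imp_differentiable[OF f square[OF that]]
      smooth_on_iter_dirD_differentiable[OF f square[OF that], of "[u]"] by simp_all
  have "\<exists>s. 0 < s \<and> s < h \<and>
      (f (x + h *\<^sub>R v + h *\<^sub>R u) - f (x + h *\<^sub>R u)) - (f (x + h *\<^sub>R v + 0 *\<^sub>R u) - f (x + 0 *\<^sub>R u))
        = (h - 0) * (dirD f (x + h *\<^sub>R v + s *\<^sub>R u) u - dirD f (x + s *\<^sub>R u) u)"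
  proof (rule MVT2[OF h])
    fix s assume "0 \<le> s" "s \<le> h"
    then have "f differentiable (at (x + h *\<^sub>R v + s *\<^sub>R u))" "f differentiable (at (x + s *\<^sub>R u))"
      using dif[of s h] dif[of s 0] h by (simp_all add: add_ac)
    then show "((\<lambda>s. f (x + h *\<^sub>R v + s *\<^sub>R u) - f (x + s *\<^sub>R u)) has_real_derivative
        dirD f (x + h *\<^sub>R v + s *\<^sub>R u) u - dirD f (x + s *\<^sub>R u) u) (at s)"
      by (intro DERIV_diff has_real_derivative_along_line) simp_all
  qed
  then obtain s where s: "0 < s" "s < h"
    and first_mvt: "f (x + h *\<^sub>R u + h *\<^sub>R v) - f (x + h *\<^sub>R u) - f (x + h *\<^sub>R v) + f x
                  = h * (iter_dirD f [u] (x + s *\<^sub>R u + h *\<^sub>R v) - iter_dirD f [u] (x + s *\<^sub>R u))"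
    by (auto simp: add_ac)
  obtain t where t: "0 < t" "t < h"
    and second_mvt: "iter_dirD f [u] (x + s *\<^sub>R u + h *\<^sub>R v) - iter_dirD f [u] (x + s *\<^sub>R u)
                  = h * iter_dirD f [v, u] (x + s *\<^sub>R u + t *\<^sub>R v)"
    using mvt_along_line[OF h, of "iter_dirD f [u]" "x + s *\<^sub>R u" v] dif[of s] s by auto
  show ?thesis
    using s t first_mvt second_mvt by (intro exI[of _ s] exI[of _ t]) simp
qed

lemma smooth_on_mixed_dirD_commute:
  fixes f :: "'a::real_normed_vector \<Rightarrow> real"
  assumes U: "open U" "x \<in> U" and f: "smooth_on U f"
  shows "iter_dirD f [v, u] x = iter_dirD f [u, v] x"
proof -
  let ?F1 = "iter_dirD f [v, u]" and ?F2 = "iter_dirD f [u, v]"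
  have bound: "\<bar>?F1 x - ?F2 x\<bar> \<le> 2 * e" if e: "e > 0" for e
  proof -
    have "isCont ?F1 x" "isCont ?F2 x"
      using smooth_on_iter_dirD_differentiable[OF f U(2)] differentiable_imp_continuous_within by blast+
    then have "eventually (\<lambda>y. dist (?F1 y) (?F1 x) < e) (at x)"
              "eventually (\<lambda>y. dist (?F2 y) (?F2 x) < e) (at x)"
      using e by (auto simp: isCont_def tendsto_iff)
    with eventually_at_in_open'[OF U]
    have "eventually (\<lambda>y. y \<in> U \<and> \<bar>?F1 y - ?F1 x\<bar> < e \<and> \<bar>?F2 y - ?F2 x\<bar> < e) (at x)"
      by eventually_elim (simp add: dist_real_def)
    then obtain d where d: "d > 0" and near_punctured: "\<And>y. y \<noteq> x \<Longrightarrow> dist y x < d \<Longrightarrow>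
        y \<in> U \<and> \<bar>?F1 y - ?F1 x\<bar> < e \<and> \<bar>?F2 y - ?F2 x\<bar> < e"
      unfolding eventually_at by blast
    have near: "y \<in> U \<and> \<bar>?F1 y - ?F1 x\<bar> < e \<and> \<bar>?F2 y - ?F2 x\<bar> < e" if "dist y x < d" for y
      using near_punctured[OF _ that] U(2) e by (cases "y = x") simp_all
    define h where "h = d / (norm u + norm v + 1)"
    have scale: "norm u + norm v + 1 > 0"
      by (simp add: add_nonneg_pos)
    then have h: "h > 0"
      using d by (simp add: h_def)
    have close: "dist (x + s *\<^sub>R u + t *\<^sub>R v) x < d" if "0 \<le> s" "s \<le> h" "0 \<le> t" "t \<le> h" for s t
    proof -
      have "dist (x + s *\<^sub>R u + t *\<^sub>R v) x \<le> s * norm u + t * norm v"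
        using norm_triangle_ineq[of "s *\<^sub>R u" "t *\<^sub>R v"] that by (simp add: dist_norm add.assoc)
      also have "\<dots> \<le> h * (norm u + norm v)"
        using that by (simp add: distrib_left add_mono mult_right_mono)
      also have "\<dots> < h * (norm u + norm v + 1)"
        using h by simp
      also have "\<dots> = d"
        using scale by (simp add: h_def)
      finally show ?thesis .
    qed
    have close': "dist (x + s *\<^sub>R v + t *\<^sub>R u) x < d" if "0 \<le> s" "s \<le> h" "0 \<le> t" "t \<le> h" for s t
      using close[OF that(3,4,1,2)] by (simp add: add_ac)
    have "\<exists>s t. 0 < s \<and> s < h \<and> 0 < t \<and> t < h \<and>
        f (x + h *\<^sub>R u + h *\<^sub>R v) - f (x + h *\<^sub>R u) - f (x + h *\<^sub>R v) + f x
          = h * h * ?F1 (x + s *\<^sub>R u + t *\<^sub>R v)"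
      by (rule second_difference_mvt[OF f h]) (use near close in blast)
    then obtain s1 t1 where st1: "0 < s1" "s1 < h" "0 < t1" "t1 < h"
      and D1: "f (x + h *\<^sub>R u + h *\<^sub>R v) - f (x + h *\<^sub>R u) - f (x + h *\<^sub>R v) + f x
                 = h * h * ?F1 (x + s1 *\<^sub>R u + t1 *\<^sub>R v)"
      by blast
    have "\<exists>s t. 0 < s \<and> s < h \<and> 0 < t \<and> t < h \<and>
        f (x + h *\<^sub>R v + h *\<^sub>R u) - f (x + h *\<^sub>R v) - f (x + h *\<^sub>R u) + f x
          = h * h * ?F2 (x + s *\<^sub>R v + t *\<^sub>R u)"
      by (rule second_difference_mvt[OF f h]) (use near close' in blast)
    then obtain s2 t2 where st2: "0 < s2" "s2 < h" "0 < t2" "t2 < h"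
      and D2: "f (x + h *\<^sub>R v + h *\<^sub>R u) - f (x + h *\<^sub>R v) - f (x + h *\<^sub>R u) + f x
                 = h * h * ?F2 (x + s2 *\<^sub>R v + t2 *\<^sub>R u)"
      by blast
    have "?F1 (x + s1 *\<^sub>R u + t1 *\<^sub>R v) = ?F2 (x + s2 *\<^sub>R v + t2 *\<^sub>R u)"
      using D1 D2 h by (simp add: algebra_simps)
    moreover have "\<bar>?F1 (x + s1 *\<^sub>R u + t1 *\<^sub>R v) - ?F1 x\<bar> < e"
      using near close st1 by force
    moreover have "\<bar>?F2 (x + s2 *\<^sub>R v + t2 *\<^sub>R u) - ?F2 x\<bar> < e"
      using near close' st2 by force
    ultimately show ?thesis
      by linarith
  qed
  have "?F1 x - ?F2 x = 0"
  proof (rule dense_eq0_I)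
    fix e :: real
    assume "e > 0"
    then show "\<bar>?F1 x - ?F2 x\<bar> \<le> e"
      using bound[of "e / 2"] by simp
  qed
  then show ?thesis
    by simp
qed

lemma dirD_basis_expansion:
  fixes f :: "real^'n \<Rightarrow> real"
  assumes "f differentiable (at y)"
  shows "dirD f y w = (\<Sum>i\<in>UNIV. w $ i * dirD f y (axis i 1))"
proof -
  have "dirD f y w = dirD f y (\<Sum>i\<in>UNIV. w $ i *\<^sub>R axis i 1)"
    using basis_expansion[of w] by (simp add: scalar_mult_eq_scaleR)
  also have "\<dots> = (\<Sum>i\<in>UNIV. w $ i * dirD f y (axis i 1))"
    using linear_dirD[OF assms] by (simp add: linear_sum linear_cmul)
  finally show ?thesis .
qed

lemma dirD_const: "dirD (\<lambda>_. c) x w = 0"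
proof -
  have "((\<lambda>_. c) has_derivative (\<lambda>_. 0)) (at x)"
    by simp
  then show ?thesis
    by (simp add: dirD_def frechet_derivative_at[symmetric])
qed

lemma dirD_dirD_along_field:
  fixes f :: "real^'n \<Rightarrow> real" and Z :: "real^'n \<Rightarrow> real^'n"
  assumes U: "open U" "x \<in> U" and f: "smooth_on U f" and Z: "Z differentiable (at x)"
  shows "dirD (\<lambda>y. dirD f y (Z y)) x w = dirD f x (dirD Z x w) + iter_dirD f [w, Z x] x"
proof -
  define g where "g i = iter_dirD f [axis i 1]" for i
  have expansion: "dirD (\<lambda>y. dirD f y (Z y)) x w
      = dirD f x (dirD Z x w) + (\<Sum>i\<in>UNIV. Z x $ i * dirD (g i) x w)"
    if Z: "Z differentiable (at x)" for Z :: "real^'n \<Rightarrow> real^'n"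
  proof -
    have DZ: "(Z has_derivative dirD Z x) (at x)"
      using Z by (rule has_derivative_dirD)
    have Dg: "(g i has_derivative dirD (g i) x) (at x)" for i
      unfolding g_def by (rule has_derivative_dirD[OF smooth_on_iter_dirD_differentiable[OF f U(2)]])
    have "((\<lambda>y. \<Sum>i\<in>UNIV. Z y $ i * g i y) has_derivative
        (\<lambda>w. \<Sum>i\<in>UNIV. Z x $ i * dirD (g i) x w + dirD Z x w $ i * g i x)) (at x)"
      by (intro has_derivative_sum has_derivative_mult Dg
          bounded_linear.has_derivative[OF bounded_linear_vec_nth DZ])
    moreover have "dirD f y (Z y) = (\<Sum>i\<in>UNIV. Z y $ i * g i y)" if "y \<in> U" for y
      using dirD_basis_expansion[OF smooth_on_imp_differentiable[OF f that], of "Z y"]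
      by (simp add: g_def)
    ultimately have "dirD (\<lambda>y. dirD f y (Z y)) x w
        = (\<Sum>i\<in>UNIV. Z x $ i * dirD (g i) x w) + (\<Sum>i\<in>UNIV. dirD Z x w $ i * g i x)"
      by (simp add: dirD_transform_within_open[OF U] sum.distrib)
    also have "(\<Sum>i\<in>UNIV. dirD Z x w $ i * g i x) = dirD f x (dirD Z x w)"
      using dirD_basis_expansion[OF smooth_on_imp_differentiable[OF f U(2)], of "dirD Z x w"]
      by (simp add: g_def)
    finally show ?thesis
      by simp
  qed
  have "iter_dirD f [w, Z x] x = (\<Sum>i\<in>UNIV. Z x $ i * dirD (g i) x w)"
    using expansion[of "\<lambda>_. Z x"] linear_dirD[OF smooth_on_imp_differentiable[OF f U(2)]]
    by (simp add: dirD_const linear_0)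
  then show ?thesis
    using expansion[OF Z] by simp
qed

lemma dirD_lie:
  fixes f :: "real^3 \<Rightarrow> real" and X Y :: "real^3 \<Rightarrow> real^3"
  assumes U: "open U" "x \<in> U" and f: "smooth_on U f"
    and X: "X differentiable (at x)" and Y: "Y differentiable (at x)"
  shows "dirD f x (lie X Y x)
           = dirD (\<lambda>y. dirD f y (Y y)) x (X x) - dirD (\<lambda>y. dirD f y (X y)) x (Y x)"
proof -
  have "dirD f x (lie X Y x) = dirD f x (dirD Y x (X x)) - dirD f x (dirD X x (Y x))"
    using linear_dirD[OF smooth_on_imp_differentiable[OF f U(2)]]
    by (simp add: lie_def linear_diff)
  then show ?thesis
    using dirD_dirD_along_field[OF U f X] dirD_dirD_along_field[OF U f Y]
      smooth_on_mixed_dirD_commute[OF U f, of "X x" "Y x"]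
    by simp
qed

lemma dirD_comp_eq_0:
  fixes b l :: "'a::real_normed_vector \<Rightarrow> real" and g :: "real \<times> real \<Rightarrow> real"
  assumes U: "open U" "x \<in> U" and F: "\<And>y. y \<in> U \<Longrightarrow> F y = g (b y, l y)"
    and g: "g differentiable (at (b x, l x))"
    and b: "b differentiable (at x)" "dirD b x v = 0"
    and l: "l differentiable (at x)" "dirD l x v = 0"
  shows "dirD F x v = 0"
proof -
  have Dg: "(g has_derivative dirD g (b x, l x)) (at (b x, l x))"
    using g by (rule has_derivative_dirD)
  have "((\<lambda>y. (b y, l y)) has_derivative (\<lambda>w. (dirD b x w, dirD l x w))) (at x)"
    using b(1) l(1) by (intro has_derivative_Pair has_derivative_dirD)
  from has_derivative_compose[OF this Dg]
  have "dirD F x v = dirD g (b x, l x) (0, 0)"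
    using dirD_transform_within_open[OF U F] b(2) l(2) by simp
  then show ?thesis
    using linear_0[OF has_derivative_linear[OF Dg]] by (simp add: zero_prod_def)
qed

lemma orthonormal_image_spans:
  fixes D :: "real^3 \<Rightarrow> 'b::real_inner" and u :: "nat \<Rightarrow> real^3"
  assumes D: "linear D"
    and orthonormal: "\<And>j k. j \<in> {1,2,3} \<Longrightarrow> k \<in> {1,2,3} \<Longrightarrow>
                        inner (D (u j)) (D (u k)) = (if j = k then 1 else 0)"
  shows "\<exists>c1 c2 c3. w = c1 *\<^sub>R u 1 + c2 *\<^sub>R u 2 + c3 *\<^sub>R u 3"
proof -
  define M where "M c = c$1 *\<^sub>R u 1 + c$2 *\<^sub>R u 2 + c$3 *\<^sub>R u 3" for c :: "real^3"
  have M: "linear M"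
    by (rule linearI) (simp_all add: M_def algebra_simps)
  have coordinate: "inner (D (M c)) (D (u 1)) = c $ 1" "inner (D (M c)) (D (u 2)) = c $ 2"
      "inner (D (M c)) (D (u 3)) = c $ 3" for c
    using orthonormal by (simp_all add: M_def linear_add[OF D] linear_cmul[OF D] inner_add_left)
  have "inj M"
    unfolding linear_injective_0[OF M]
  proof (intro allI impI)
    fix c
    assume "M c = 0"
    then have "c $ 1 = 0" "c $ 2 = 0" "c $ 3 = 0"
      using coordinate[of c] unfolding \<open>M c = 0\<close> linear_0[OF D] by simp_all
    then show "c = 0"
      by (simp add: vec_eq_iff forall_3)
  qed
  then obtain c where "w = M c"
    using M eucl.linear_inj_imp_surj by (metis surjD)
  then show ?thesis
    by (auto simp: M_def)
qed

lemma kernel_in_span_of_orthonormal_image: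
  fixes D :: "real^3 \<Rightarrow> 'b::real_inner" and u :: "nat \<Rightarrow> real^3" and \<phi> :: "real^3 \<Rightarrow> real"
  assumes D: "linear D"
    and orthonormal: "\<And>j k. j \<in> {1,2,3} \<Longrightarrow> k \<in> {1,2,3} \<Longrightarrow>
                        inner (D (u j)) (D (u k)) = (if j = k then 1 else 0)"
    and \<phi>: "linear \<phi>" "\<phi> (u 1) \<noteq> 0" "\<phi> (u 2) = 0" "\<phi> (u 3) = 0"
    and w: "\<phi> w = 0"
  shows "\<exists>c2 c3. w = c2 *\<^sub>R u 2 + c3 *\<^sub>R u 3"
proof -
  obtain c1 c2 c3 where c: "w = c1 *\<^sub>R u 1 + c2 *\<^sub>R u 2 + c3 *\<^sub>R u 3"
    using orthonormal_image_spans[OF D orthonormal] by blast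
  then have "c1 * \<phi> (u 1) = 0"
    using w \<phi> by (simp add: linear_add linear_cmul)
  then show ?thesis
    using c \<phi>(2) by auto
qed

theorem lemma1:
  fixes U :: "(real^3) set"
    and E0 :: "real^3 \<Rightarrow> complex^4"
    and e :: "nat \<Rightarrow> real^3 \<Rightarrow> real^3"
    and a l2 b1 :: "real^3 \<Rightarrow> real"
  assumes U: "open U" "connected U"
    and smooth: "smooth_on U E0" "\<And>j. j \<in> {1,2,3} \<Longrightarrow> smooth_on U (e j)"
                "smooth_on U a" "smooth_on U l2" "smooth_on U b1"
    and sphere: "\<And>x. x \<in> U \<Longrightarrow> norm (E0 x) = 1"
    and horizontal: "\<And>x v. x \<in> U \<Longrightarrow> inner (dirD E0 x v) (E0 x) = 0"
                    "\<And>x v. x \<in> U \<Longrightarrow> inner (dirD E0 x v) (imul (E0 x)) = 0"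
    and orthonormal: "\<And>x j k. x \<in> U \<Longrightarrow> j \<in> {1,2,3} \<Longrightarrow> k \<in> {1,2,3} \<Longrightarrow>
                        inner (liftE E0 (e j) x) (liftE E0 (e k) x) = (if j = k then 1 else 0)"
    and lagrangian: "\<And>x j k. x \<in> U \<Longrightarrow> j \<in> {1,2,3} \<Longrightarrow> k \<in> {1,2,3} \<Longrightarrow>
                        inner (liftE E0 (e j) x) (imul (liftE E0 (e k) x)) = 0"
    and sff: "\<And>x j k l. x \<in> U \<Longrightarrow> j \<in> {1,2,3} \<Longrightarrow> k \<in> {1,2,3} \<Longrightarrow> l \<in> {1,2,3} \<Longrightarrow>
                inner (dirD (liftE E0 (e k)) x (e j x)) (imul (liftE E0 (e l) x))
                  = Cval (a x) (l2 x) j k l"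
    and l2_nz: "\<And>x. x \<in> U \<Longrightarrow> l2 x \<noteq> 0"
    and DE11: "\<And>x. x \<in> U \<Longrightarrow> dirD (liftE E0 (e 1)) x (e 1 x)
                 = (4 * l2 x) *\<^sub>R imul (liftE E0 (e 1) x) - E0 x"
    and DEj1: "\<And>x j. x \<in> U \<Longrightarrow> j \<in> {2,3} \<Longrightarrow> dirD (liftE E0 (e 1)) x (e j x)
                 = b1 x *\<^sub>R liftE E0 (e j) x + l2 x *\<^sub>R imul (liftE E0 (e j) x)"
    and dl2: "\<And>x. x \<in> U \<Longrightarrow> dirD l2 x (e 2 x) = 0" "\<And>x. x \<in> U \<Longrightarrow> dirD l2 x (e 3 x) = 0"
             "\<And>x. x \<in> U \<Longrightarrow> dirD l2 x (e 1 x) = 2 * l2 x * b1 x"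
    and db1: "\<And>x. x \<in> U \<Longrightarrow> dirD b1 x (e 2 x) = 0" "\<And>x. x \<in> U \<Longrightarrow> dirD b1 x (e 3 x) = 0"
             "\<And>x. x \<in> U \<Longrightarrow> dirD b1 x (e 1 x) = - (1 + (b1 x)\<^sup>2 + 3 * (l2 x)\<^sup>2)"
  shows "\<forall>x\<in>U.
           (\<exists>c2 c3. lie (e 1) (e 2) x = c2 *\<^sub>R e 2 x + c3 *\<^sub>R e 3 x) \<and>
           (\<exists>c2 c3. lie (e 1) (e 3) x = c2 *\<^sub>R e 2 x + c3 *\<^sub>R e 3 x) \<and>
           (\<exists>c2 c3. lie (e 2) (e 3) x = c2 *\<^sub>R e 2 x + c3 *\<^sub>R e 3 x)"
proof
  fix x
  assume x: "x \<in> U"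
  have e: "e j differentiable (at x)" if "j \<in> {1,2,3}" for j
    using smooth_on_imp_differentiable[OF smooth(2)[OF that] x] .
  have b1: "b1 differentiable (at x)" and l2: "l2 differentiable (at x)"
    using smooth_on_imp_differentiable[OF smooth(5) x] smooth_on_imp_differentiable[OF smooth(4) x] .
  have "0 < 1 + (b1 x)\<^sup>2 + 3 * (l2 x)\<^sup>2"
    by (simp add: add_pos_nonneg)
  then have e1_b1: "dirD b1 x (e 1 x) \<noteq> 0"
    using db1(3)[OF x] by linarith
  have e23_b1_const: "dirD (\<lambda>y. dirD b1 y (e j y)) x v = 0" if "j \<in> {2,3}" for j v
    using db1(1,2) that
    by (intro dirD_transform_within_open[OF U(1) x, where G = "\<lambda>_. 0" and G' = "\<lambda>_. 0"]) auto
  have e1_b1_e23_const: "dirD (\<lambda>y. dirD b1 y (e 1 y)) x (e j x) = 0" if "j \<in> {2,3}" for j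
  proof (rule dirD_comp_eq_0[OF U(1) x])
    show "\<And>y. y \<in> U \<Longrightarrow> dirD b1 y (e 1 y) = (\<lambda>(p, q). - (1 + p\<^sup>2 + 3 * q\<^sup>2)) (b1 y, l2 y)"
      using db1(3) by simp
    show "(\<lambda>(p, q). - (1 + p\<^sup>2 + 3 * q\<^sup>2)) differentiable (at (b1 x, l2 x))"
      unfolding case_prod_unfold differentiable_def by (auto intro!: derivative_eq_intros)
    show "dirD b1 x (e j x) = 0" "dirD l2 x (e j x) = 0"
      using that db1(1,2)[OF x] dl2(1,2)[OF x] by auto
  qed (use b1 l2 in auto)
  have "dirD b1 x (lie (e j) (e k) x) = 0" if "j \<in> {1,2}" "k \<in> {2,3}" for j k
  proof -
    have "dirD b1 x (lie (e j) (e k) x)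
        = dirD (\<lambda>y. dirD b1 y (e k y)) x (e j x) - dirD (\<lambda>y. dirD b1 y (e j y)) x (e k x)"
      using that by (intro dirD_lie[OF U(1) x smooth(5)] e) auto
    then show ?thesis
      using that e23_b1_const e1_b1_e23_const by auto
  qed
  moreover have "\<exists>c2 c3. w = c2 *\<^sub>R e 2 x + c3 *\<^sub>R e 3 x" if "dirD b1 x w = 0" for w
  proof (rule kernel_in_span_of_orthonormal_image[where D = "dirD E0 x" and \<phi> = "dirD b1 x"])
    show "linear (dirD E0 x)"
      using smooth_on_imp_differentiable[OF smooth(1) x] by (rule linear_dirD)
    show "\<And>j k. j \<in> {1,2,3} \<Longrightarrow> k \<in> {1,2,3} \<Longrightarrow>
        inner (dirD E0 x (e j x)) (dirD E0 x (e k x)) = (if j = k then 1 else 0)"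
      using orthonormal[OF x] by (simp add: liftE_def)
  qed (use that e1_b1 db1(1,2)[OF x] linear_dirD[OF b1] in auto)
  ultimately show "(\<exists>c2 c3. lie (e 1) (e 2) x = c2 *\<^sub>R e 2 x + c3 *\<^sub>R e 3 x) \<and>
           (\<exists>c2 c3. lie (e 1) (e 3) x = c2 *\<^sub>R e 2 x + c3 *\<^sub>R e 3 x) \<and>
           (\<exists>c2 c3. lie (e 2) (e 3) x = c2 *\<^sub>R e 2 x + c3 *\<^sub>R e 3 x)"
    by simp
qed

end
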